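(* Let $m\ge1$ and let $G$ be a graph with $n$ vertices that contains no induced copy of $mK_5$ (the disjoint union of $m$ copies of $K_5$). Then $$\tilde b(G)\le 4^{m-1}\,3^{(n-5(m-1))/4}=\left(\frac{4}{3^{5/4}}\right)^{m-1}3^{n/4}.$$
   Context: $\mathrm{Ind}(G)$ is the independence complex of $G$ (including the empty face), and $\tilde b(G)=\sum_{i\ge-1}\dim_{\mathbb{K}}\widetilde H_i(\mathrm{Ind}(G);\mathbb{K})$ for a fixed field $\mathbb{K}$. *)

theory Defs
  imports Complex_Main "HOL-Library.Function_Algebras"
begin

definition simple_graph :: "'a set \<Rightarrow> ('a \<Rightarrow> 'a \<Rightarrow> bool) \<Rightarrow> bool" where
  "simple_graph V E \<longleftrightarrow> finite V \<and> (\<forall>u v. E u v \<longrightarrow> u \<in> V \<and> v \<in> V)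
     \<and> (\<forall>u v. E u v \<longrightarrow> E v u) \<and> (\<forall>u. \<not> E u u)"

text \<open>Faces of the independence complex (the empty set included).\<close>
definition indep :: "'a set \<Rightarrow> ('a \<Rightarrow> 'a \<Rightarrow> bool) \<Rightarrow> 'a set \<Rightarrow> bool" where
  "indep V E s \<longleftrightarrow> s \<subseteq> V \<and> (\<forall>u\<in>s. \<forall>v\<in>s. \<not> E u v)"

text \<open>Faces with k vertices, i.e. of dimension k-1.\<close>
definition faces :: "'a set \<Rightarrow> ('a \<Rightarrow> 'a \<Rightarrow> bool) \<Rightarrow> nat \<Rightarrow> 'a set set" where
  "faces V E k = {s. indep V E s \<and> card s = k}"

definition fscale :: "'k::field \<Rightarrow> ('a set \<Rightarrow> 'k) \<Rightarrow> ('a set \<Rightarrow> 'k)" where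
  "fscale c f = (\<lambda>x. c * f x)"

text \<open>Chain group C_{k-1} of the augmented (reduced) chain complex:
  K-linear combinations of faces with k vertices.\<close>
definition chains :: "'a set \<Rightarrow> ('a \<Rightarrow> 'a \<Rightarrow> bool) \<Rightarrow> nat \<Rightarrow> ('a set \<Rightarrow> 'k::field) set" where
  "chains V E k = {f. \<forall>s. f s \<noteq> 0 \<longrightarrow> s \<in> faces V E k}"

text \<open>Boundary map from chains on k-vertex faces to chains on (k-1)-vertex faces,
  with the standard sign convention w.r.t. the linear order of the vertices:
  for s = {v_0 < ... < v_{k-1}}, d(e_s) = sum_j (-1)^j e_{s - {v_j}}.\<close>
definition bdry :: "'a::linorder set \<Rightarrow> ('a \<Rightarrow> 'a \<Rightarrow> bool) \<Rightarrow> nat \<Rightarrow> ('a set \<Rightarrow> 'k::field) \<Rightarrow> ('a set \<Rightarrow> 'k)" where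
  "bdry V E k f = (\<lambda>t. if k = 0 \<or> t \<notin> faces V E (k - 1) then 0 else
      (\<Sum>v\<in>{v \<in> V - t. insert v t \<in> faces V E k}.
          (-1) ^ card {u \<in> t. u < v} * f (insert v t)))"

text \<open>Dimension of the reduced homology of Ind(G) in dimension k-1 over the field 'k:
  dim ker d_k - dim im d_{k+1}.\<close>
definition red_betti :: "'k::field itself \<Rightarrow> 'a::linorder set \<Rightarrow> ('a \<Rightarrow> 'a \<Rightarrow> bool) \<Rightarrow> nat \<Rightarrow> nat" where
  "red_betti K V E k =
     vector_space.dim (fscale :: 'k \<Rightarrow> _) {f \<in> (chains V E k :: ('a set \<Rightarrow> 'k) set). bdry V E k f = 0}
     - vector_space.dim (fscale :: 'k \<Rightarrow> _) (bdry V E (Suc k) ` (chains V E (Suc k) :: ('a set \<Rightarrow> 'k) set))"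

text \<open>Total reduced Betti number: sum over all dimensions i >= -1 (faces have at most |V| vertices).\<close>
definition total_red_betti :: "'k::field itself \<Rightarrow> 'a::linorder set \<Rightarrow> ('a \<Rightarrow> 'a \<Rightarrow> bool) \<Rightarrow> nat" where
  "total_red_betti K V E = (\<Sum>k\<in>{0..card V}. red_betti K V E k)"

definition has_induced_mK5 :: "'a set \<Rightarrow> ('a \<Rightarrow> 'a \<Rightarrow> bool) \<Rightarrow> nat \<Rightarrow> bool" where
  "has_induced_mK5 V E m \<longleftrightarrow> (\<exists>B :: nat \<Rightarrow> 'a set.
      (\<forall>i<m. B i \<subseteq> V \<and> card (B i) = 5 \<and> (\<forall>u\<in>B i. \<forall>v\<in>B i. u \<noteq> v \<longrightarrow> E u v))
    \<and> (\<forall>i<m. \<forall>j<m. i \<noteq> j \<longrightarrow> B i \<inter> B j = {} \<and> (\<forall>u\<in>B i. \<forall>v\<in>B j. \<not> E u v)))"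

end

theory Submission
  imports Defs
begin

text \<open>
  Write \<open>b(G)\<close> for the total reduced Betti number of Ind(G). Comparing the chain complexes of
  Ind(G - v) \<subseteq> Ind(G), whose quotient is the suspension of the link Ind(G - N[v]), gives
  \<open>b(G) \<le> b(G - v) + b(G - N[v])\<close>; and \<open>b(G) = 0\<close> when G has an isolated vertex, since Ind(G) is
  then a cone. The bound follows by induction on the number of vertices, with \<open>\<rho> = 3\<^sup>-\<^sup>1\<^sup>/\<^sup>4\<close>
  the factor gained per deleted vertex. A vertex of degree at least 5 is handled by the first
  inequality, as \<open>\<rho> + \<rho>\<^sup>6 \<le> 1\<close>. Otherwise let \<open>v\<close> have minimum degree \<open>d \<le> 4\<close>; deleting the
  neighbours \<open>w\<^sub>1, \<dots>, w\<^sub>d\<close> of \<open>v\<close> one at a time gives \<open>b(G) \<le> \<Sum>\<^sub>i b(G - {w\<^sub>1, \<dots>, w\<^sub>i\<^sub>-\<^sub>1} - N[w\<^sub>i])\<close>,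
  each term losing at least \<open>d + 1\<close> vertices, and one term \<open>d + 2\<close> if two neighbours of \<open>v\<close> are
  non-adjacent; as \<open>d \<rho>\<^sup>d\<^sup>+\<^sup>1 \<le> 1\<close> for \<open>d \<le> 3\<close> and \<open>3\<rho>\<^sup>5 + \<rho>\<^sup>6 \<le> 1\<close>, this suffices. In the remaining case
  N[v] is a \<open>K\<^sub>5\<close>-component C, so \<open>b(G) \<le> 4 b(G - C)\<close> and G - C has no induced \<open>(m-1)K\<^sub>5\<close>.
\<close>

section \<open>Rank inequalities\<close>

context vector_space
begin

lemma basis_finite_span_exists:
  assumes "S \<subseteq> span F" "finite F"
  obtains B where "B \<subseteq> S" "independent B" "S \<subseteq> span B" "card B = dim S" "finite B"
proof -
  obtain B where B: "B \<subseteq> S" "independent B" "S \<subseteq> span B" "card B = dim S"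
    using basis_exists by blast
  have "finite B" using independent_span_bound[OF assms(2) B(2)] B(1) assms(1) by auto
  then show ?thesis using B that by blast
qed

lemma dim_mono_finite_span:
  assumes "S \<subseteq> T" "T \<subseteq> span F" "finite F"
  shows "dim S \<le> dim T"
proof -
  obtain C where "T \<subseteq> span C" "card C = dim T" "finite C"
    using basis_finite_span_exists[OF assms(2,3)] by metis
  then show ?thesis using dim_le_card[of S C] assms(1) by auto
qed

lemma dim_kernel_image_le:
  assumes "Vector_Spaces.linear scale scale f" and W: "W \<subseteq> span F" "finite F"
  shows "dim {x\<in>W. f x = 0} + dim (f ` W) \<le> dim W"
proof -
  interpret f: Vector_Spaces.linear scale scale f by fact
  have "{x\<in>W. f x = 0} \<subseteq> span F" using W(1) by blast
  then obtain K where K: "K \<subseteq> {x\<in>W. f x = 0}" "independent K"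
      "{x\<in>W. f x = 0} \<subseteq> span K" "card K = dim {x\<in>W. f x = 0}" "finite K"
    using W(2) by (rule basis_finite_span_exists)
  obtain B where B: "K \<subseteq> B" "B \<subseteq> W" "independent B" "W \<subseteq> span B"
    using maximal_independent_subset_extend[of K W] K by auto
  have fin: "finite B" using independent_span_bound[OF W(2) B(3)] B(2) W(1) by auto
  have "f ` W \<subseteq> span (f ` B)"
    using f.spans_image[OF B(4)] .
  also have "f ` B \<subseteq> insert 0 (f ` (B - K))"
    using K(1) by auto
  then have "span (f ` B) \<subseteq> span (f ` (B - K))"
    by (metis span_insert_0 span_mono)
  finally have "dim (f ` W) \<le> card (f ` (B - K))"
    using dim_le_card fin by auto
  also have "\<dots> \<le> card (B - K)"
    using fin by (simp add: card_image_le)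
  also have "\<dots> = card B - card K"
    using fin B(1) by (simp add: card_Diff_subset finite_subset)
  finally show ?thesis
    using basis_card_eq_dim[OF B(2,4,3)] K(4) card_mono[OF fin B(1)] by linarith
qed

lemma dim_le_kernel_image:
  assumes "Vector_Spaces.linear scale scale f" and W: "W \<subseteq> span F" "finite F" "subspace W"
  shows "dim W \<le> dim {x\<in>W. f x = 0} + dim (f ` W)"
proof -
  interpret f: Vector_Spaces.linear scale scale f by fact
  have "{x\<in>W. f x = 0} \<subseteq> span F" using W(1) by blast
  then obtain K where K: "K \<subseteq> {x\<in>W. f x = 0}" "independent K"
      "{x\<in>W. f x = 0} \<subseteq> span K" "card K = dim {x\<in>W. f x = 0}" "finite K"
    using W(2) by (rule basis_finite_span_exists)
  have "finite (f ` F)" using W(2) by simp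
  with f.spans_image[OF W(1)] obtain C where C: "C \<subseteq> f ` W" "independent C"
      "f ` W \<subseteq> span C" "card C = dim (f ` W)" "finite C"
    by (rule basis_finite_span_exists)
  have "\<forall>c\<in>C. \<exists>w\<in>W. f w = c" using C(1) by auto
  then obtain g where g: "\<And>c. c \<in> C \<Longrightarrow> g c \<in> W \<and> f (g c) = c" by metis
  have "W \<subseteq> span (K \<union> g ` C)"
  proof
    fix x assume x: "x \<in> W"
    then obtain u where u: "f x = (\<Sum>c\<in>C. scale (u c) c)"
      using C(3) span_finite[OF C(5)] by auto
    define y where "y = (\<Sum>c\<in>C. scale (u c) (g c))"
    have yW: "y \<in> W" unfolding y_def
      using g W(3) by (auto intro!: subspace_sum subspace_scale)
    have "f y = (\<Sum>c\<in>C. scale (u c) (f (g c)))" unfolding y_def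
      by (simp add: f.sum f.scale)
    also have "\<dots> = f x" using u g by simp
    finally have "x - y \<in> {x\<in>W. f x = 0}" using x yW W(3)
      by (auto simp: f.diff subspace_diff)
    then have "x - y \<in> span (K \<union> g ` C)" using K(3) span_mono[of K "K \<union> g ` C"] by auto
    moreover have "y \<in> span (K \<union> g ` C)" unfolding y_def
      by (intro span_sum span_scale span_base) auto
    ultimately have "(x - y) + y \<in> span (K \<union> g ` C)" by (rule span_add)
    then show "x \<in> span (K \<union> g ` C)" by simp
  qed
  then have "dim W \<le> card (K \<union> g ` C)" using dim_le_card K(5) C(5) by auto
  also have "\<dots> \<le> card K + card (g ` C)" by (rule card_Un_le)
  also have "\<dots> \<le> card K + card C" using card_image_le[OF C(5), of g] by simp
  finally show ?thesis using K(4) C(4) by simp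
qed

lemma dim_diff_le_kernel_image:
  assumes "Vector_Spaces.linear scale scale f" "Z \<subseteq> span F" "B \<subseteq> span F" "finite F" "subspace Z"
  shows "dim Z - dim B \<le> (dim {x\<in>Z. f x = 0} - dim {x\<in>B. f x = 0}) + (dim (f ` Z) - dim (f ` B))"
  using dim_le_kernel_image[OF assms(1,2,4,5)] dim_kernel_image_le[OF assms(1,3,4)] by linarith

end

section \<open>Chains of the independence complex\<close>

lemma sum_fun_apply: "(\<Sum>s\<in>S. f s) x = (\<Sum>s\<in>S. f s x)"
  by (induction S rule: infinite_finite_induct) auto

interpretation fs: vector_space "fscale :: 'k::field \<Rightarrow> ('a set \<Rightarrow> 'k) \<Rightarrow> ('a set \<Rightarrow> 'k)"
  by unfold_locales (auto simp: fscale_def fun_eq_iff algebra_simps)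

lemma faces_iff: "s \<in> faces V E k \<longleftrightarrow> s \<subseteq> V \<and> (\<forall>x\<in>s. \<forall>y\<in>s. \<not> E x y) \<and> card s = k"
  by (simp add: faces_def indep_def)

lemma finite_faces: "finite V \<Longrightarrow> finite (faces V E k)"
  by (rule finite_subset[of _ "Pow V"]) (auto simp: faces_iff)

lemma chains_iff: "f \<in> chains V E k \<longleftrightarrow> (\<forall>s. s \<notin> faces V E k \<longrightarrow> f s = 0)"
  by (auto simp: chains_def)

lemma chains_support: "f \<in> chains V E k \<Longrightarrow> f s \<noteq> 0 \<Longrightarrow> s \<in> faces V E k"
  by (auto simp: chains_iff)

lemma chains_mono: "W \<subseteq> V \<Longrightarrow> chains W E k \<subseteq> chains V E k"
  by (auto simp: chains_iff faces_iff)

lemma chains_eqI: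
  assumes "f \<in> chains V E k" "g \<in> chains V E k" "\<And>s. s \<in> faces V E k \<Longrightarrow> f s = g s"
  shows "f = g"
  using assms unfolding chains_iff by (metis ext)

lemma chains_finite_span:
  assumes "finite V"
  obtains F :: "('a set \<Rightarrow> 'k::field) set" where "finite F" "chains V E k \<subseteq> fs.span F"
proof
  let ?F = "(\<lambda>s t. if t = s then 1 else 0) ` faces V E k :: ('a set \<Rightarrow> 'k) set"
  show "finite ?F" using finite_faces[OF assms] by simp
  show "chains V E k \<subseteq> fs.span ?F"
  proof
    fix f :: "'a set \<Rightarrow> 'k" assume f: "f \<in> chains V E k"
    have "f = (\<Sum>s\<in>faces V E k. fscale (f s) (\<lambda>t. if t = s then 1 else 0))"
      using f finite_faces[OF assms]
      by (auto simp: fun_eq_iff fscale_def sum_fun_apply chains_iff if_distrib cong: if_cong)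
    also have "\<dots> \<in> fs.span ?F"
      by (intro fs.span_sum fs.span_scale fs.span_base) auto
    finally show "f \<in> fs.span ?F" .
  qed
qed

lemma subspace_chains: "fs.subspace (chains V E k)"
  by (auto simp: fs.subspace_def chains_iff fscale_def)

lemma linear_bdry: "Vector_Spaces.linear fscale fscale (bdry V E k)"
  unfolding Vector_Spaces.linear_iff
  by (auto simp: fs.vector_space_axioms bdry_def fun_eq_iff fscale_def sum.distrib sum_distrib_left algebra_simps)

lemma bdry_chains: "bdry V E k f \<in> chains V E (k - 1)"
  by (auto simp: bdry_def chains_iff)

lemma bdry_0 [simp]: "bdry V E 0 f = 0"
  by (auto simp: bdry_def fun_eq_iff)

lemma bdry_uminus: "bdry V E k (- f) = - bdry V E k f"
  by (simp add: bdry_def fun_eq_iff sum_negf)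

lemma chains_uminus: "f \<in> chains V E k \<Longrightarrow> - f \<in> chains V E k"
  by (simp add: chains_iff)

definition cycles :: "'a::linorder set \<Rightarrow> ('a \<Rightarrow> 'a \<Rightarrow> bool) \<Rightarrow> nat \<Rightarrow> ('a set \<Rightarrow> 'k::field) set" where
  "cycles V E k = {f \<in> chains V E k. bdry V E k f = 0}"

definition boundaries :: "'a::linorder set \<Rightarrow> ('a \<Rightarrow> 'a \<Rightarrow> bool) \<Rightarrow> nat \<Rightarrow> ('a set \<Rightarrow> 'k::field) set" where
  "boundaries V E k = bdry V E (Suc k) ` chains V E (Suc k)"

lemma red_betti_eq_dim_diff:
  "red_betti TYPE('k::field) V E k
     = fs.dim (cycles V E k :: ('a::linorder set \<Rightarrow> 'k) set) - fs.dim (boundaries V E k :: ('a set \<Rightarrow> 'k) set)"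
  by (simp add: red_betti_def cycles_def boundaries_def)

lemma cycles_subset_chains: "cycles V E k \<subseteq> chains V E k"
  by (auto simp: cycles_def)

lemma boundaries_subset_chains: "boundaries V E k \<subseteq> chains V E k"
  using bdry_chains[of V E "Suc k"] by (auto simp: boundaries_def)

lemma subspace_cycles: "fs.subspace (cycles V E k)"
proof -
  interpret bdry: Vector_Spaces.linear fscale fscale "bdry V E k" by (rule linear_bdry)
  show ?thesis
    by (simp add: cycles_def Collect_conj_eq fs.subspace_inter subspace_chains bdry.subspace_kernel)
qed

lemma dim_subset_zero: "S \<subseteq> {0} \<Longrightarrow> fs.dim S = 0"
  using fs.dim_le_card[of S "{}"] by simp

definition insert_sign :: "'a::linorder set \<Rightarrow> 'a \<Rightarrow> 'k::comm_ring_1" where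
  "insert_sign t w = (-1) ^ card {u \<in> t. u < w}"

lemma insert_sign_square [simp]: "insert_sign t w * insert_sign t w = 1"
  by (simp add: insert_sign_def power_mult_distrib[symmetric])

lemma insert_sign_insert:
  assumes "finite t" "v \<notin> t"
  shows "insert_sign (insert v t) w = (if v < w then - insert_sign t w else insert_sign t w)"
proof -
  have "{u \<in> insert v t. u < w} = (if v < w then insert v {u \<in> t. u < w} else {u \<in> t. u < w})"
    by auto
  then show ?thesis using assms by (simp add: insert_sign_def)
qed

lemma insert_sign_swap:
  assumes "finite t" "v \<notin> t" "w \<notin> t" "v \<noteq> w"
  shows "insert_sign t v * insert_sign (insert v t) w = - (insert_sign t w * insert_sign (insert w t) v)"
  using assms by (cases "v < w") (auto simp: insert_sign_insert)

lemma insert_sign_insert_swap: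
  assumes "finite t" "v \<notin> t" "w \<notin> t" "v \<noteq> w"
  shows "insert_sign (insert v t) w * insert_sign (insert w t) v = - (insert_sign t v * insert_sign t w)"
  using assms by (cases "v < w") (auto simp: insert_sign_insert)

lemma bdry_chain:
  assumes "finite V" "f \<in> chains V E (Suc j)" "card t = j"
  shows "bdry V E (Suc j) f t = (\<Sum>w\<in>V - t. insert_sign t w * f (insert w t))"
proof (cases "t \<in> faces V E j")
  case True
  then have "bdry V E (Suc j) f t
      = (\<Sum>w\<in>{w \<in> V - t. insert w t \<in> faces V E (Suc j)}. insert_sign t w * f (insert w t))"
    by (simp add: bdry_def insert_sign_def)
  also have "\<dots> = (\<Sum>w\<in>V - t. insert_sign t w * f (insert w t))"
    using assms by (intro sum.mono_neutral_left) (auto simp: chains_iff)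
  finally show ?thesis .
next
  case False
  have "f (insert w t) = 0" if "w \<notin> t" for w
  proof -
    have "insert w t \<notin> faces V E (Suc j)"
      using False that assms(1,3) by (auto simp: faces_iff intro: finite_subset)
    then show ?thesis using assms(2) by (simp add: chains_iff)
  qed
  then show ?thesis using False by (simp add: bdry_def)
qed

lemma bdry_restrict:
  assumes "finite V" "W \<subseteq> V" "f \<in> chains W E k"
  shows "bdry W E k f = bdry V E k f"
proof (cases k)
  case (Suc j)
  have fV: "f \<in> chains V E k" using assms chains_mono by blast
  show ?thesis
  proof (rule chains_eqI)
    show "bdry W E k f \<in> chains V E j" "bdry V E k f \<in> chains V E j"
      using bdry_chains[of W E k f] bdry_chains[of V E k f] chains_mono[OF assms(2)] Suc by auto
    fix t assume "t \<in> faces V E j"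
    then have t: "card t = j" by (simp add: faces_iff)
    have "(\<Sum>w\<in>W - t. insert_sign t w * f (insert w t)) = (\<Sum>w\<in>V - t. insert_sign t w * f (insert w t))"
      using assms by (intro sum.mono_neutral_left) (auto dest: chains_support simp: faces_iff)
    moreover have "finite W" using assms(1,2) by (rule finite_subset[rotated])
    ultimately show "bdry W E k f t = bdry V E k f t"
      using bdry_chain[of W f E j t] bdry_chain[of V f E j t] assms(1,3) fV t by (simp add: Suc)
  qed
qed simp

section \<open>Deleting a vertex\<close>

text \<open>\<open>link_proj v f\<close> reads off the coefficients of \<open>f\<close> on the faces containing \<open>v\<close> as a chain on the
  link of \<open>v\<close>, which is Ind(G - N[v]); \<open>cone v\<close> is the inverse construction.\<close>

definition link_proj :: "'a::linorder \<Rightarrow> ('a set \<Rightarrow> 'k) \<Rightarrow> 'a set \<Rightarrow> 'k::comm_ring_1" where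
  "link_proj v f = (\<lambda>t. if v \<notin> t then insert_sign t v * f (insert v t) else 0)"

definition cone :: "'a::linorder \<Rightarrow> ('a set \<Rightarrow> 'k) \<Rightarrow> 'a set \<Rightarrow> 'k::comm_ring_1" where
  "cone v f = (\<lambda>s. if v \<in> s then insert_sign (s - {v}) v * f (s - {v}) else 0)"

lemma linear_link_proj: "Vector_Spaces.linear fscale fscale (link_proj v :: ('a::linorder set \<Rightarrow> 'k::field) \<Rightarrow> _)"
  unfolding Vector_Spaces.linear_iff
  by (auto simp: fs.vector_space_axioms link_proj_def fun_eq_iff fscale_def algebra_simps)

lemma bdry_cone_off_apex:
  assumes "finite V" "v \<in> V" "cone v z \<in> chains V E (Suc k)" "card t = k" "v \<notin> t"
  shows "bdry V E (Suc k) (cone v z) t = z t"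
proof -
  have "insert_sign t w * cone v z (insert w t)
      = (if w = v then insert_sign t v * insert_sign t v * z t else 0)" if "w \<notin> t" for w
    using assms(5) that by (auto simp: cone_def mult.assoc)
  then have "bdry V E (Suc k) (cone v z) t
      = (\<Sum>w\<in>V - t. if w = v then insert_sign t v * insert_sign t v * z t else 0)"
    unfolding bdry_chain[OF assms(1,3,4)] by (intro sum.cong) auto
  then show ?thesis using assms(1,2,5) by simp
qed

lemma bdry_cone_at_apex:
  assumes "finite V" "v \<in> V" "cone v z \<in> chains V E (Suc k)" "z \<in> cycles V E k"
    and t: "finite t" "card t = k" "v \<in> t"
  shows "bdry V E (Suc k) (cone v z) t = z t"
proof -
  define s where "s = t - {v}"
  have s: "t = insert v s" "v \<notin> s" "finite s" using t by (auto simp: s_def)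
  then obtain j where j: "k = Suc j" "card s = j" using t(2) by (cases k) auto
  have "0 = bdry V E (Suc j) z s" using assms(4) j(1) by (simp add: cycles_def)
  also have "\<dots> = (\<Sum>w\<in>insert v (V - t). insert_sign s w * z (insert w s))"
  proof -
    have "V - s = insert v (V - t)" using s assms(2) by auto
    then show ?thesis using bdry_chain[OF assms(1), of z E j s] assms(4) j by (simp add: cycles_def)
  qed
  also have "\<dots> = insert_sign s v * z t + (\<Sum>w\<in>V - t. insert_sign s w * z (insert w s))"
    using assms(1) t(3) by (simp add: s(1)[symmetric])
  finally have cycle: "(\<Sum>w\<in>V - t. insert_sign s w * z (insert w s)) = - (insert_sign s v * z t)"
    by (simp add: eq_neg_iff_add_eq_0 add.commute)
  have "insert_sign t w * cone v z (insert w t) = - (insert_sign s v * (insert_sign s w * z (insert w s)))"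
    if "w \<in> V - t" for w
  proof -
    have w: "w \<notin> s" "w \<noteq> v" "insert w t - {v} = insert w s" using that s by auto
    have sg: "insert_sign t w * insert_sign (insert w s) v = - (insert_sign s v * insert_sign s w)"
      using insert_sign_insert_swap[OF s(3,2) w(1) w(2)[symmetric]] by (simp add: s(1))
    show ?thesis using w(3) t(3) by (simp add: cone_def sg flip: mult.assoc)
  qed
  then have "bdry V E (Suc k) (cone v z) t
      = - (insert_sign s v * (\<Sum>w\<in>V - t. insert_sign s w * z (insert w s)))"
    unfolding bdry_chain[OF assms(1,3) t(2)] by (simp add: sum_negf sum_distrib_left)
  also have "\<dots> = insert_sign s v * insert_sign s v * z t"
    unfolding cycle by (simp add: mult.assoc)
  finally show ?thesis by simp
qed

lemma link_proj_0 [simp]: "link_proj v 0 = 0"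
  by (simp add: link_proj_def fun_eq_iff)

lemma link_proj_cone:
  assumes "\<And>s. v \<in> s \<Longrightarrow> h s = 0"
  shows "link_proj v (cone v h) = h"
proof
  fix t
  show "link_proj v (cone v h) t = h t"
    using assms[of t] by (auto simp: link_proj_def cone_def mult.assoc[symmetric] insert_absorb)
qed

lemma link_proj_chains_0:
  assumes "finite V" "f \<in> chains V E 0"
  shows "link_proj v f = 0"
proof -
  have "insert v t \<notin> faces V E 0" for t
    using assms(1) by (auto simp: faces_iff dest: finite_subset)
  then show ?thesis using assms(2) by (auto simp: chains_iff link_proj_def fun_eq_iff)
qed

lemma link_proj_eq_0_iff:
  assumes "f \<in> chains V E k"
  shows "link_proj v f = 0 \<longleftrightarrow> f \<in> chains (V - {v}) E k"
proof
  assume f0: "link_proj v f = 0"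
  show "f \<in> chains (V - {v}) E k"
    unfolding chains_iff
  proof (intro allI impI)
    fix s assume s: "s \<notin> faces (V - {v}) E k"
    show "f s = 0"
    proof (cases "v \<in> s")
      case True
      then have "insert_sign (s - {v}) v * f s = 0"
        using fun_cong[OF f0, of "s - {v}"] by (simp add: link_proj_def insert_absorb)
      then show ?thesis
        by (metis insert_sign_square mult_1 mult.assoc mult_zero_right)
    next
      case False
      then show ?thesis using s assms by (auto simp: chains_iff faces_iff)
    qed
  qed
next
  assume "f \<in> chains (V - {v}) E k"
  then show "link_proj v f = 0"
    by (auto simp: chains_iff faces_iff link_proj_def fun_eq_iff)
qed

lemma cycles_delete_vertex:
  assumes "finite V"
  shows "{x \<in> cycles V E k. link_proj v x = 0} = cycles (V - {v}) E k"
proof -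
  have restrict: "bdry (V - {v}) E k f = bdry V E k f" "f \<in> chains V E k"
    if "f \<in> chains (V - {v}) E k" for f
    using bdry_restrict[OF assms _ that] chains_mono[of "V - {v}" V E k] that by auto
  show ?thesis by (auto simp: cycles_def restrict link_proj_eq_0_iff)
qed

lemma boundaries_delete_vertex:
  assumes "finite V"
  shows "boundaries (V - {v}) E k \<subseteq> {x \<in> boundaries V E k. link_proj v x = 0}"
proof
  fix y assume "y \<in> boundaries (V - {v}) E k"
  then obtain g where g: "g \<in> chains (V - {v}) E (Suc k)" "y = bdry (V - {v}) E (Suc k) g"
    by (auto simp: boundaries_def)
  have gV: "g \<in> chains V E (Suc k)" using g(1) chains_mono[of "V - {v}" V] by blast
  have "y \<in> chains (V - {v}) E k" using g(2) bdry_chains[of "V - {v}" E "Suc k" g] by simp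
  then have "link_proj v y = 0"
    using link_proj_eq_0_iff chains_mono[of "V - {v}" V] by blast
  moreover have "y = bdry V E (Suc k) g" using g bdry_restrict[OF assms] by blast
  ultimately show "y \<in> {x \<in> boundaries V E k. link_proj v x = 0}"
    using gV by (auto simp: boundaries_def)
qed

locale graph =
  fixes E :: "'a::linorder \<Rightarrow> 'a \<Rightarrow> bool"
  assumes sym: "E x y \<Longrightarrow> E y x" and irrefl: "\<not> E x x"
begin

abbreviation nbhd :: "'a \<Rightarrow> 'a set" where
  "nbhd v \<equiv> insert v {u. E v u}"

lemma faces_link_iff:
  assumes "finite V" "v \<in> V"
  shows "t \<in> faces (V - nbhd v) E k \<longleftrightarrow> v \<notin> t \<and> insert v t \<in> faces V E (Suc k)"
proof
  assume t: "t \<in> faces (V - nbhd v) E k"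
  then have "finite t" "v \<notin> t" using assms(1) by (auto simp: faces_iff intro: finite_subset)
  then show "v \<notin> t \<and> insert v t \<in> faces V E (Suc k)"
    using t assms(2) sym irrefl by (auto simp: faces_iff)
next
  assume t: "v \<notin> t \<and> insert v t \<in> faces V E (Suc k)"
  then have "finite t" using assms(1) by (auto simp: faces_iff intro: finite_subset)
  then show "t \<in> faces (V - nbhd v) E k"
    using t by (auto simp: faces_iff)
qed

lemma link_proj_chains:
  assumes "finite V" "v \<in> V" "f \<in> chains V E (Suc k)"
  shows "link_proj v f \<in> chains (V - nbhd v) E k"
  using assms by (auto simp: chains_iff link_proj_def faces_link_iff)

lemma cone_chains:
  assumes "finite V" "v \<in> V" "h \<in> chains (V - nbhd v) E k"
  shows "cone v h \<in> chains V E (Suc k)"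
  unfolding chains_iff
proof (intro allI impI)
  fix s assume "s \<notin> faces V E (Suc k)"
  then have "v \<in> s \<Longrightarrow> s - {v} \<notin> faces (V - nbhd v) E k"
    using assms(1,2) by (simp add: faces_link_iff insert_absorb)
  then show "cone v h s = 0"
    using assms(3) by (simp add: cone_def chains_iff)
qed

lemma link_proj_bdry_apply:
  assumes "finite V" "v \<in> V" "f \<in> chains V E (Suc (Suc j))" "t \<in> faces (V - nbhd v) E j"
  shows "link_proj v (bdry V E (Suc (Suc j)) f) t = - bdry (V - nbhd v) E (Suc j) (link_proj v f) t"
proof -
  let ?L = "V - nbhd v"
  have vt: "v \<notin> t" "insert v t \<in> faces V E (Suc j)"
    using assms(4) faces_link_iff[OF assms(1,2)] by auto
  have ft: "finite t" "card t = j" using assms(1,4) by (auto simp: faces_iff intro: finite_subset)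
  have "link_proj v (bdry V E (Suc (Suc j)) f) t
      = insert_sign t v * (\<Sum>w\<in>V - insert v t. insert_sign (insert v t) w * f (insert w (insert v t)))"
    using bdry_chain[OF assms(1,3), of "insert v t"] vt ft by (simp add: link_proj_def)
  also have "\<dots> = insert_sign t v * (\<Sum>w\<in>?L - t. insert_sign (insert v t) w * f (insert w (insert v t)))"
  proof -
    have "f (insert w (insert v t)) = 0" if "E v w" for w
      using that assms(3) by (auto simp: chains_iff faces_iff)
    then show ?thesis
      using assms(1) by (intro arg_cong[where f = "(*) _"] sum.mono_neutral_right) auto
  qed
  also have "\<dots> = - (\<Sum>w\<in>?L - t. insert_sign t w * link_proj v f (insert w t))"
    unfolding sum_distrib_left sum_negf[symmetric]
  proof (rule sum.cong[OF refl])
    fix w assume "w \<in> ?L - t"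
    then have w: "w \<noteq> v" "w \<notin> t" by auto
    then show "insert_sign t v * (insert_sign (insert v t) w * f (insert w (insert v t)))
        = - (insert_sign t w * link_proj v f (insert w t))"
      using vt(1)
      by (simp add: link_proj_def insert_commute insert_sign_swap[OF ft(1) vt(1) w(2) w(1)[symmetric]]
          flip: mult.assoc)
  qed
  also have "\<dots> = - bdry ?L E (Suc j) (link_proj v f) t"
    using bdry_chain[of ?L "link_proj v f" E j t] link_proj_chains[OF assms(1-3)] assms(1) ft(2)
    by simp
  finally show ?thesis .
qed

lemma link_proj_bdry:
  assumes "finite V" "v \<in> V" "f \<in> chains V E (Suc k)"
  shows "link_proj v (bdry V E (Suc k) f) = - bdry (V - nbhd v) E k (link_proj v f)"
proof (cases k)
  case 0
  then show ?thesis
    using link_proj_chains_0[OF assms(1)] bdry_chains[of V E "Suc k" f] by simp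
next
  case (Suc j)
  let ?L = "V - nbhd v"
  show ?thesis
  proof (rule chains_eqI)
    show "link_proj v (bdry V E (Suc k) f) \<in> chains ?L E j"
      using link_proj_chains[OF assms(1,2), of "bdry V E (Suc k) f"] bdry_chains[of V E "Suc k" f] Suc
      by simp
    show "- bdry ?L E k (link_proj v f) \<in> chains ?L E j"
      using chains_uminus[OF bdry_chains[of ?L E k "link_proj v f"]] Suc by simp
    show "link_proj v (bdry V E (Suc k) f) t = (- bdry ?L E k (link_proj v f)) t"
      if "t \<in> faces ?L E j" for t
      using link_proj_bdry_apply[OF assms(1,2) _ that] assms(3) Suc by simp
  qed
qed

lemma cone_chains_if_isolated:
  assumes "finite V" "v \<in> V" "\<And>u. u \<in> V \<Longrightarrow> \<not> E v u" "z \<in> chains V E k"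
  shows "cone v z \<in> chains V E (Suc k)"
  unfolding chains_iff
proof (intro allI impI)
  have "s \<in> faces (V - nbhd v) E k \<longleftrightarrow> s \<in> faces V E k \<and> v \<notin> s" for s
    using assms(2,3) by (auto simp: faces_iff)
  moreover fix s assume "s \<notin> faces V E (Suc k)"
  ultimately have "v \<in> s \<Longrightarrow> s - {v} \<notin> faces V E k"
    using faces_link_iff[OF assms(1,2)] by (metis Diff_iff insert_Diff singletonI)
  then show "cone v z s = 0" using assms(4) by (simp add: cone_def chains_iff)
qed

text \<open>An isolated vertex makes Ind(G) a cone, and coning off is a contracting homotopy.\<close>

lemma bdry_cone_cycle:
  assumes "finite V" "v \<in> V" "\<And>u. u \<in> V \<Longrightarrow> \<not> E v u" and z: "z \<in> cycles V E k"
  shows "bdry V E (Suc k) (cone v z) = z"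
proof (rule chains_eqI)
  have cone: "cone v z \<in> chains V E (Suc k)"
    using cone_chains_if_isolated[OF assms(1-3)] z by (auto simp: cycles_def)
  then show "bdry V E (Suc k) (cone v z) \<in> chains V E k"
    using bdry_chains[of V E "Suc k"] by simp
  show "z \<in> chains V E k" using z by (simp add: cycles_def)
  fix t assume "t \<in> faces V E k"
  then have t: "finite t" "card t = k" using assms(1) by (auto simp: faces_iff intro: finite_subset)
  show "bdry V E (Suc k) (cone v z) t = z t"
    using bdry_cone_off_apex[OF assms(1,2) cone t(2)] bdry_cone_at_apex[OF assms(1,2) cone z t]
    by blast
qed

lemma link_proj_cycles:
  assumes "finite V" "v \<in> V"
  shows "link_proj v ` cycles V E (Suc k) \<subseteq> cycles (V - nbhd v) E k"
proof
  fix y assume "y \<in> link_proj v ` cycles V E (Suc k)"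
  then obtain z where z: "z \<in> chains V E (Suc k)" "bdry V E (Suc k) z = 0" "y = link_proj v z"
    by (auto simp: cycles_def)
  then show "y \<in> cycles (V - nbhd v) E k"
    using link_proj_chains[OF assms z(1)] link_proj_bdry[OF assms z(1)]
    by (simp add: cycles_def)
qed

lemma link_proj_boundaries:
  assumes "finite V" "v \<in> V"
  shows "link_proj v ` boundaries V E (Suc k) = boundaries (V - nbhd v) E k"
proof (intro set_eqI iffI)
  let ?L = "V - nbhd v"
  fix y assume "y \<in> link_proj v ` boundaries V E (Suc k)"
  then obtain g where g: "g \<in> chains V E (Suc (Suc k))" "y = link_proj v (bdry V E (Suc (Suc k)) g)"
    by (auto simp: boundaries_def)
  then have "y = bdry ?L E (Suc k) (- link_proj v g)"
    using link_proj_bdry[OF assms g(1)] by (simp add: bdry_uminus)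
  moreover have "- link_proj v g \<in> chains ?L E (Suc k)"
    using chains_uminus link_proj_chains[OF assms g(1)] by blast
  ultimately show "y \<in> boundaries ?L E k" by (simp add: boundaries_def)
next
  let ?L = "V - nbhd v"
  fix y assume "y \<in> boundaries ?L E k"
  then obtain h where h: "h \<in> chains ?L E (Suc k)" "y = bdry ?L E (Suc k) h"
    by (auto simp: boundaries_def)
  have nh: "- h \<in> chains ?L E (Suc k)" using chains_uminus[OF h(1)] .
  have cone: "cone v (- h) \<in> chains V E (Suc (Suc k))" by (rule cone_chains[OF assms nh])
  have "link_proj v (cone v (- h)) = - h"
    by (rule link_proj_cone) (use nh in \<open>auto simp: chains_iff faces_iff\<close>)
  then have "y = link_proj v (bdry V E (Suc (Suc k)) (cone v (- h)))"
    using link_proj_bdry[OF assms cone] h(2) by (simp add: bdry_uminus)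
  then show "y \<in> link_proj v ` boundaries V E (Suc k)"
    using cone by (simp add: boundaries_def)
qed

text \<open>The dimension count behind the long exact sequence of Ind(G - v) \<subseteq> Ind(G): the kernel of
  \<open>link_proj v\<close> gives the homology of Ind(G - v), its image that of the link, shifted by one.\<close>

lemma red_betti_delete_vertex:
  assumes "finite V" "v \<in> V"
  shows "red_betti TYPE('k::field) V E k \<le> red_betti TYPE('k) (V - {v}) E k
           + (case k of 0 \<Rightarrow> 0 | Suc j \<Rightarrow> red_betti TYPE('k) (V - nbhd v) E j)"
proof -
  let ?Z = "cycles V E k :: ('a set \<Rightarrow> 'k) set" and ?B = "boundaries V E k :: ('a set \<Rightarrow> 'k) set"
  obtain F :: "('a set \<Rightarrow> 'k) set" where F: "finite F" "chains V E k \<subseteq> fs.span F"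
    using chains_finite_span[OF assms(1)] .
  then have ZB: "?Z \<subseteq> fs.span F" "?B \<subseteq> fs.span F"
    using cycles_subset_chains boundaries_subset_chains by blast+
  have "fs.dim ?Z - fs.dim ?B
      \<le> (fs.dim {x\<in>?Z. link_proj v x = 0} - fs.dim {x\<in>?B. link_proj v x = 0})
        + (fs.dim (link_proj v ` ?Z) - fs.dim (link_proj v ` ?B))"
    by (rule fs.dim_diff_le_kernel_image[OF linear_link_proj ZB F(1) subspace_cycles])
  moreover have "fs.dim {x\<in>?Z. link_proj v x = 0} - fs.dim {x\<in>?B. link_proj v x = 0}
      \<le> red_betti TYPE('k) (V - {v}) E k"
  proof -
    have "fs.dim (boundaries (V - {v}) E k :: ('a set \<Rightarrow> 'k) set) \<le> fs.dim {x\<in>?B. link_proj v x = 0}"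
      by (rule fs.dim_mono_finite_span[OF boundaries_delete_vertex[OF assms(1)] _ F(1)])
        (use ZB(2) in auto)
    then show ?thesis
      by (simp add: red_betti_eq_dim_diff cycles_delete_vertex[OF assms(1)] diff_le_mono2)
  qed
  moreover have "fs.dim (link_proj v ` ?Z) - fs.dim (link_proj v ` ?B)
      \<le> (case k of 0 \<Rightarrow> 0 | Suc j \<Rightarrow> red_betti TYPE('k) (V - nbhd v) E j)"
  proof (cases k)
    case 0
    then have "link_proj v ` ?Z \<subseteq> {0}"
      using link_proj_chains_0[OF assms(1)] by (auto simp: cycles_def)
    then show ?thesis by (simp add: dim_subset_zero)
  next
    case (Suc j)
    obtain F' :: "('a set \<Rightarrow> 'k) set" where F': "finite F'" "chains (V - nbhd v) E j \<subseteq> fs.span F'"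
      using chains_finite_span[of "V - nbhd v"] assms(1) by blast
    have "fs.dim (link_proj v ` ?Z) \<le> fs.dim (cycles (V - nbhd v) E j :: ('a set \<Rightarrow> 'k) set)"
      using link_proj_cycles[OF assms, of j] F'(2) cycles_subset_chains[of "V - nbhd v" E j] Suc
      by (intro fs.dim_mono_finite_span[OF _ _ F'(1)]) auto
    then show ?thesis
      using Suc by (simp add: red_betti_eq_dim_diff link_proj_boundaries[OF assms] diff_le_mono)
  qed
  ultimately show ?thesis by (simp add: red_betti_eq_dim_diff)
qed

lemma red_betti_isolated:
  assumes "finite V" "v \<in> V" "\<And>u. u \<in> V \<Longrightarrow> \<not> E v u"
  shows "red_betti TYPE('k::field) V E k = 0"
proof -
  let ?Z = "cycles V E k :: ('a set \<Rightarrow> 'k) set" and ?B = "boundaries V E k :: ('a set \<Rightarrow> 'k) set"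
  obtain F :: "('a set \<Rightarrow> 'k) set" where F: "finite F" "chains V E k \<subseteq> fs.span F"
    using chains_finite_span[OF assms(1)] .
  have "?Z \<subseteq> ?B"
  proof
    fix z assume z: "z \<in> ?Z"
    then have "cone v z \<in> chains V E (Suc k)"
      using cone_chains_if_isolated[OF assms] by (auto simp: cycles_def)
    then show "z \<in> ?B" using bdry_cone_cycle[OF assms z] by (force simp: boundaries_def)
  qed
  moreover have "?B \<subseteq> fs.span F" using F(2) boundaries_subset_chains by blast
  ultimately have "fs.dim ?Z \<le> fs.dim ?B" by (rule fs.dim_mono_finite_span[OF _ _ F(1)])
  then show ?thesis by (simp add: red_betti_eq_dim_diff)
qed

end

lemma red_betti_card_less:
  assumes "finite V" "card V < k"
  shows "red_betti TYPE('k::field) V E k = 0"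
proof -
  have "faces V E k = {}" using assms card_mono[OF assms(1)] by (fastforce simp: faces_iff)
  then have "{f \<in> chains V E k :: ('a set \<Rightarrow> 'k) set. bdry V E k f = 0} \<subseteq> {0}"
    by (auto simp: chains_iff)
  then show ?thesis by (simp add: red_betti_def dim_subset_zero)
qed

lemma total_red_betti_atMost:
  assumes "finite V" "card V \<le> N"
  shows "total_red_betti TYPE('k::field) V E = (\<Sum>k\<le>N. red_betti TYPE('k) V E k)"
  unfolding total_red_betti_def using assms red_betti_card_less[OF assms(1), where 'k='k]
  by (intro sum.mono_neutral_left) auto

lemma total_red_betti_empty: "total_red_betti TYPE('k::field) {} E \<le> 1"
proof -
  let ?e = "\<lambda>t :: 'a set. if t = {} then 1 else 0 :: 'k"
  define Z :: "('a set \<Rightarrow> 'k) set" where "Z = {f \<in> chains {} E 0. bdry {} E 0 f = 0}"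
  have "faces {} E 0 = {{}}" by (auto simp: faces_iff)
  have "Z \<subseteq> fs.span {?e}"
  proof
    fix f assume "f \<in> Z"
    then have "f = fscale (f {}) ?e"
      using \<open>faces {} E 0 = {{}}\<close> by (auto simp: Z_def chains_iff fun_eq_iff fscale_def)
    also have "\<dots> \<in> fs.span {?e}" by (intro fs.span_scale fs.span_base) simp
    finally show "f \<in> fs.span {?e}" .
  qed
  then have "fs.dim Z \<le> card {?e}" by (rule fs.dim_le_card) simp
  then show ?thesis by (simp add: total_red_betti_def red_betti_def Z_def)
qed

context graph
begin

lemma total_red_betti_isolated:
  assumes "finite V" "v \<in> V" "\<And>u. u \<in> V \<Longrightarrow> \<not> E v u"
  shows "total_red_betti TYPE('k::field) V E = 0"
  using red_betti_isolated[OF assms, where 'k='k] by (simp add: total_red_betti_def)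

lemma total_red_betti_delete_vertex:
  assumes "finite V" "v \<in> V"
  shows "total_red_betti TYPE('k::field) V E
           \<le> total_red_betti TYPE('k) (V - {v}) E + total_red_betti TYPE('k) (V - nbhd v) E"
proof -
  have "card V \<noteq> 0" using assms by auto
  then obtain n where n: "card V = Suc n" using not0_implies_Suc by blast
  have "card (V - nbhd v) \<le> n"
    using assms n card_mono[of "V - {v}" "V - nbhd v"] by auto
  then have link: "total_red_betti TYPE('k) (V - nbhd v) E = (\<Sum>j\<le>n. red_betti TYPE('k) (V - nbhd v) E j)"
    using assms(1) by (intro total_red_betti_atMost) auto
  have "total_red_betti TYPE('k) V E = (\<Sum>k\<le>Suc n. red_betti TYPE('k) V E k)"
    using assms n by (intro total_red_betti_atMost) auto
  also have "\<dots> \<le> (\<Sum>k\<le>Suc n. red_betti TYPE('k) (V - {v}) E k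
      + (case k of 0 \<Rightarrow> 0 | Suc j \<Rightarrow> red_betti TYPE('k) (V - nbhd v) E j))"
    by (intro sum_mono red_betti_delete_vertex[OF assms])
  also have "\<dots> = (\<Sum>k\<le>Suc n. red_betti TYPE('k) (V - {v}) E k)
      + (\<Sum>k\<le>Suc n. case k of 0 \<Rightarrow> 0 | Suc j \<Rightarrow> red_betti TYPE('k) (V - nbhd v) E j)"
    by (rule sum.distrib)
  also have "\<dots> = total_red_betti TYPE('k) (V - {v}) E + total_red_betti TYPE('k) (V - nbhd v) E"
  proof -
    have "total_red_betti TYPE('k) (V - {v}) E = (\<Sum>k\<le>Suc n. red_betti TYPE('k) (V - {v}) E k)"
      using assms n by (intro total_red_betti_atMost) auto
    moreover have "(\<Sum>k\<le>Suc n. case k of 0 \<Rightarrow> 0 | Suc j \<Rightarrow> red_betti TYPE('k) (V - nbhd v) E j)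
        = (\<Sum>j\<le>n. red_betti TYPE('k) (V - nbhd v) E j)"
      by (simp only: sum.atMost_Suc_shift) simp
    ultimately show ?thesis using link by simp
  qed
  finally show ?thesis .
qed

end

section \<open>The numerical bound\<close>

definition mK5_bound :: "nat \<Rightarrow> nat \<Rightarrow> real" where
  "mK5_bound m n = 4 ^ (m - 1) * 3 powr ((real n - 5 * (real m - 1)) / 4)"

definition rho :: real where
  "rho = 3 powr (-1/4)"

lemma rho_pow: "rho ^ d = 3 powr (- real d / 4)"
  by (simp add: rho_def powr_realpow[symmetric] powr_powr)

lemma rho_pow_4: "rho ^ 4 = 1/3"
  by (simp add: rho_pow powr_minus)

lemma rho_bounds: "3/4 \<le> rho" "rho \<le> 77/100"
proof -
  have "0 \<le> rho" by (simp add: rho_def)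
  show "3/4 \<le> rho"
  proof (rule ccontr)
    assume "\<not> 3/4 \<le> rho"
    then have "rho ^ 4 < (3/4) ^ 4" using \<open>0 \<le> rho\<close> by (intro power_strict_mono) auto
    then show False by (simp add: rho_pow_4 power_divide)
  qed
  show "rho \<le> 77/100"
  proof (rule ccontr)
    assume "\<not> rho \<le> 77/100"
    then have "(77/100) ^ 4 < rho ^ 4" by (intro power_strict_mono) auto
    then show False by (simp add: rho_pow_4 power_divide)
  qed
qed

lemma rho_plus_rho6_le_1: "rho + rho ^ 6 \<le> 1"
proof -
  have "rho ^ 6 = rho ^ 4 * rho ^ 2" by (simp flip: power_add)
  then have "rho ^ 6 = rho ^ 2 / 3" by (simp add: rho_pow_4)
  moreover have "rho ^ 2 \<le> (77/100) ^ 2" using rho_bounds by (intro power_mono) auto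
  ultimately show ?thesis using rho_bounds by (simp add: power_divide)
qed

lemma rho5_eq: "3 * rho ^ 5 = rho"
proof -
  have "rho ^ 5 = rho ^ 4 * rho" by (simp flip: power_Suc2)
  then show ?thesis by (simp add: rho_pow_4)
qed

lemma degree_rho_le_1:
  assumes "d \<le> 3"
  shows "real d * rho ^ Suc d \<le> 1"
proof -
  have "rho ^ 3 \<le> (77/100) ^ 3" using rho_bounds by (intro power_mono) auto
  then have "2 * rho ^ 3 \<le> 1" by (simp add: power_divide)
  moreover have "rho ^ 2 \<le> 1" using rho_bounds by (intro power_le_one) auto
  moreover have "3 * rho ^ 4 = 1" by (simp add: rho_pow_4)
  moreover have "d = 0 \<or> d = 1 \<or> d = 2 \<or> d = 3" using assms by auto
  ultimately show ?thesis by (auto simp: eval_nat_numeral)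
qed

lemma mK5_bound_pos: "0 < mK5_bound m n"
  by (simp add: mK5_bound_def)

lemma mK5_bound_mono: "n \<le> n' \<Longrightarrow> mK5_bound m n \<le> mK5_bound m n'"
  by (simp add: mK5_bound_def)

lemma mK5_bound_diff: "d \<le> n \<Longrightarrow> mK5_bound m (n - d) = rho ^ d * mK5_bound m n"
proof -
  assume "d \<le> n"
  then have e: "(real (n - d) - 5 * (real m - 1)) / 4 = - real d / 4 + (real n - 5 * (real m - 1)) / 4"
    by (simp add: of_nat_diff field_simps)
  show ?thesis unfolding mK5_bound_def rho_pow e powr_add by (rule mult.left_commute)
qed

lemma mK5_bound_Suc:
  assumes "1 \<le> m" "5 \<le> n"
  shows "mK5_bound (Suc m) n = 4 * mK5_bound m (n - 5)"
proof -
  have "real (n - 5) - 5 * (real m - 1) = real n - 5 * (real (Suc m) - 1)"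
    using assms by (simp add: of_nat_diff)
  moreover have "(4::real) ^ m = 4 * 4 ^ (m - 1)" using assms by (simp add: power_eq_if)
  ultimately show ?thesis by (simp add: mK5_bound_def)
qed

lemma one_le_mK5_bound_0:
  assumes "1 \<le> m"
  shows "1 \<le> mK5_bound m 0"
proof -
  have "3 powr (- 5 * (real m - 1) / 4) = rho ^ (5 * (m - 1))"
    using assms by (simp add: rho_pow of_nat_diff)
  then have "mK5_bound m 0 = (4 * rho ^ 5) ^ (m - 1)"
    by (simp add: mK5_bound_def power_mult power_mult_distrib)
  moreover have "1 \<le> 4 * rho ^ 5" using rho5_eq rho_bounds by simp
  ultimately show ?thesis by (metis one_le_power)
qed

section \<open>Induction on the number of vertices\<close>

lemma has_induced_mK5_0: "has_induced_mK5 V E 0"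
  by (simp add: has_induced_mK5_def)

lemma has_induced_mK5_mono:
  assumes "W \<subseteq> V" "has_induced_mK5 W E m"
  shows "has_induced_mK5 V E m"
proof -
  obtain B :: "nat \<Rightarrow> 'a set" where
    "\<forall>i<m. B i \<subseteq> W \<and> card (B i) = 5 \<and> (\<forall>u\<in>B i. \<forall>v\<in>B i. u \<noteq> v \<longrightarrow> E u v)"
    "\<forall>i<m. \<forall>j<m. i \<noteq> j \<longrightarrow> B i \<inter> B j = {} \<and> (\<forall>u\<in>B i. \<forall>v\<in>B j. \<not> E u v)"
    using assms(2) unfolding has_induced_mK5_def by blast
  then show ?thesis
    using assms(1) unfolding has_induced_mK5_def by (intro exI[of _ B]) blast
qed

context graph
begin

definition degree :: "'a set \<Rightarrow> 'a \<Rightarrow> nat" where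
  "degree V v = card {u \<in> V. E v u}"

lemma card_Diff_nbhd:
  assumes "finite V" "v \<in> V"
  shows "card (V - nbhd v) + Suc (degree V v) = card V"
proof -
  have "V \<inter> nbhd v = insert v {u \<in> V. E v u}" using assms(2) by auto
  moreover have "v \<notin> {u \<in> V. E v u}" using irrefl by auto
  ultimately have "card (V \<inter> nbhd v) = Suc (degree V v)" using assms(1) by (simp add: degree_def)
  moreover have "card (V - nbhd v) + card (V \<inter> nbhd v) = card V"
    using assms(1) card_Diff_subset_Int[of V "nbhd v"] card_mono[of V "V \<inter> nbhd v"]
    by (metis Int_lower1 card_Diff_subset diff_add finite_Int)
  ultimately show ?thesis by simp
qed

lemma card_Diff_nbhd_insert:
  assumes "finite V" "w \<in> V" "a \<in> V - nbhd w"
  shows "card (V - {a} - nbhd w) + Suc (Suc (degree V w)) = card V"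
proof -
  have "V - {a} - nbhd w = (V - nbhd w) - {a}" by auto
  then have "Suc (card (V - {a} - nbhd w)) = card (V - nbhd w)"
    using assms(1,3) card_Suc_Diff1[of "V - nbhd w" a] by simp
  then show ?thesis using card_Diff_nbhd[OF assms(1,2)] by linarith
qed

lemma total_red_betti_delete_vertices:
  assumes "finite V" "distinct ws" "set ws \<subseteq> V"
  shows "total_red_betti TYPE('k::field) V E \<le> total_red_betti TYPE('k) (V - set ws) E
           + (\<Sum>i<length ws. total_red_betti TYPE('k) (V - set (take i ws) - nbhd (ws ! i)) E)"
  using assms(2,3)
proof (induction ws rule: rev_induct)
  case (snoc w ws)
  let ?T = "\<lambda>X. total_red_betti TYPE('k) X E"
  let ?S = "\<lambda>ws. \<Sum>i<length ws. ?T (V - set (take i ws) - nbhd (ws ! i))"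
  have "?T V \<le> ?T (V - set ws) + ?S ws"
    using snoc by simp
  moreover have "?T (V - set ws) \<le> ?T (V - set ws - {w}) + ?T (V - set ws - nbhd w)"
    using snoc.prems assms(1) by (intro total_red_betti_delete_vertex) auto
  moreover have "?S (ws @ [w]) = ?S ws + ?T (V - set ws - nbhd w)"
    by (simp add: nth_append)
  moreover have "V - set ws - {w} = V - set (ws @ [w])" by auto
  ultimately show ?case by simp
qed simp

text \<open>After all neighbours of \<open>v\<close> are deleted, \<open>v\<close> is isolated and the remainder term vanishes.\<close>

lemma total_red_betti_le_nbhd_sum:
  assumes "finite V" "v \<in> V" "distinct ws" "set ws = {u \<in> V. E v u}"
  shows "real (total_red_betti TYPE('k::field) V E)
           \<le> (\<Sum>i<length ws. real (total_red_betti TYPE('k) (V - set (take i ws) - nbhd (ws ! i)) E))"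
proof -
  have "total_red_betti TYPE('k) (V - set ws) E = 0"
    using assms irrefl by (intro total_red_betti_isolated[of _ v]) auto
  then show ?thesis
    using total_red_betti_delete_vertices[OF assms(1,3), where 'k='k] assms(4)
    by (simp flip: of_nat_sum)
qed

lemma nbhd_deletion_bound:
  assumes "finite V" "w \<in> V" "d \<le> degree V w"
    and IH: "\<And>X. X \<subset> V \<Longrightarrow> real (total_red_betti TYPE('k::field) X E) \<le> mK5_bound m (card X)"
  shows "real (total_red_betti TYPE('k) (V - A - nbhd w) E) \<le> mK5_bound m (card V - Suc d)"
proof -
  have "V - A - nbhd w \<subset> V" using assms(2) by auto
  then have "real (total_red_betti TYPE('k) (V - A - nbhd w) E) \<le> mK5_bound m (card (V - A - nbhd w))"
    by (rule IH)
  also have "\<dots> \<le> mK5_bound m (card V - Suc d)"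
  proof (rule mK5_bound_mono)
    have "card (V - A - nbhd w) \<le> card (V - nbhd w)" using assms(1) by (intro card_mono) auto
    then show "card (V - A - nbhd w) \<le> card V - Suc d"
      using card_Diff_nbhd[OF assms(1,2)] assms(3) by linarith
  qed
  finally show ?thesis .
qed

lemma betti_bound_high_degree:
  assumes "finite V" "v \<in> V" "5 \<le> degree V v"
    and IH: "\<And>X. X \<subset> V \<Longrightarrow> real (total_red_betti TYPE('k::field) X E) \<le> mK5_bound m (card X)"
  shows "real (total_red_betti TYPE('k) V E) \<le> mK5_bound m (card V)"
proof -
  let ?T = "\<lambda>X. real (total_red_betti TYPE('k) X E)" and ?n = "card V"
  have n: "6 \<le> ?n" using card_Diff_nbhd[OF assms(1,2)] assms(3) by linarith
  have "?T V \<le> ?T (V - {v}) + ?T (V - nbhd v)"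
    using total_red_betti_delete_vertex[OF assms(1,2), where 'k='k] by linarith
  also have "\<dots> \<le> mK5_bound m (?n - 1) + mK5_bound m (?n - 6)"
  proof (rule add_mono)
    show "?T (V - {v}) \<le> mK5_bound m (?n - 1)"
      using IH[of "V - {v}"] assms(1,2) by auto
    show "?T (V - nbhd v) \<le> mK5_bound m (?n - 6)"
      using nbhd_deletion_bound[OF assms(1-3) IH, of "{}"] by simp
  qed
  also have "\<dots> = (rho + rho ^ 6) * mK5_bound m ?n"
    using mK5_bound_diff[of 1 ?n m] mK5_bound_diff[of 6 ?n m] n by (simp add: algebra_simps)
  also have "\<dots> \<le> mK5_bound m ?n"
    using rho_plus_rho6_le_1 mK5_bound_pos[of m ?n] rho_bounds
    by (intro mult_left_le_one_le) auto
  finally show ?thesis .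
qed

lemma betti_bound_low_min_degree:
  assumes "finite V" "v \<in> V" "\<And>u. u \<in> V \<Longrightarrow> degree V v \<le> degree V u" "degree V v \<le> 3"
    and IH: "\<And>X. X \<subset> V \<Longrightarrow> real (total_red_betti TYPE('k::field) X E) \<le> mK5_bound m (card X)"
  shows "real (total_red_betti TYPE('k) V E) \<le> mK5_bound m (card V)"
proof -
  let ?T = "\<lambda>X. real (total_red_betti TYPE('k) X E)" and ?n = "card V" and ?d = "degree V v"
  define ws where "ws = sorted_list_of_set {u \<in> V. E v u}"
  have ws: "distinct ws" "set ws = {u \<in> V. E v u}" "length ws = ?d"
    using assms(1) by (auto simp: ws_def degree_def)
  have "Suc ?d \<le> ?n" using card_Diff_nbhd[OF assms(1,2)] by linarith
  have "?T V \<le> (\<Sum>i<length ws. ?T (V - set (take i ws) - nbhd (ws ! i)))"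
    by (rule total_red_betti_le_nbhd_sum[OF assms(1,2) ws(1,2)])
  also have "\<dots> \<le> (\<Sum>i<length ws. mK5_bound m (?n - Suc ?d))"
  proof (rule sum_mono)
    fix i assume "i \<in> {..<length ws}"
    then have "ws ! i \<in> V" using ws(2) nth_mem by fastforce
    then show "?T (V - set (take i ws) - nbhd (ws ! i)) \<le> mK5_bound m (?n - Suc ?d)"
      using nbhd_deletion_bound[OF assms(1) _ assms(3) IH] by blast
  qed
  also have "\<dots> = (real ?d * rho ^ Suc ?d) * mK5_bound m ?n"
    using ws(3) mK5_bound_diff[OF \<open>Suc ?d \<le> ?n\<close>] by simp
  also have "\<dots> \<le> mK5_bound m ?n"
    using degree_rho_le_1[OF assms(4)] mK5_bound_pos[of m ?n] rho_bounds
    by (intro mult_left_le_one_le) auto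
  finally show ?thesis .
qed

lemma betti_bound_min_degree_4:
  assumes "finite V" "v \<in> V" "\<And>u. u \<in> V \<Longrightarrow> degree V v \<le> degree V u" "degree V v = 4"
    and ac: "a \<in> V" "c \<in> V" "E v a" "E v c" "a \<noteq> c" "\<not> E a c"
    and IH: "\<And>X. X \<subset> V \<Longrightarrow> real (total_red_betti TYPE('k::field) X E) \<le> mK5_bound m (card X)"
  shows "real (total_red_betti TYPE('k) V E) \<le> mK5_bound m (card V)"
proof -
  let ?T = "\<lambda>X. real (total_red_betti TYPE('k) X E)" and ?n = "card V"
  let ?N = "{u \<in> V. E v u}"
  define ws where "ws = a # c # sorted_list_of_set (?N - {a, c})"
  have ws: "distinct ws" "set ws = ?N" "length ws = 4"
    using assms(1,4) ac by (auto simp: ws_def degree_def card_Diff_subset)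
  have "a \<in> V - nbhd c" using ac sym by auto
  moreover have "4 \<le> degree V c" using assms(3,4) ac(2) by metis
  ultimately have card_ac: "card (V - {a} - nbhd c) + 6 \<le> ?n"
    using card_Diff_nbhd_insert[OF assms(1) ac(2)] by fastforce
  have "?T V \<le> (\<Sum>i<length ws. ?T (V - set (take i ws) - nbhd (ws ! i)))"
    by (rule total_red_betti_le_nbhd_sum[OF assms(1,2) ws(1,2)])
  also have "\<dots> \<le> (\<Sum>i<4::nat. if i = 1 then mK5_bound m (?n - 6) else mK5_bound m (?n - 5))"
    unfolding ws(3)
  proof (rule sum_mono)
    fix i :: nat assume i: "i \<in> {..<4}"
    show "?T (V - set (take i ws) - nbhd (ws ! i)) \<le> (if i = 1 then mK5_bound m (?n - 6) else mK5_bound m (?n - 5))"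
    proof (cases "i = 1")
      case True
      have "V - {a} - nbhd c \<subset> V" using ac by auto
      then have "?T (V - {a} - nbhd c) \<le> mK5_bound m (card (V - {a} - nbhd c))" by (rule IH)
      also have "\<dots> \<le> mK5_bound m (?n - 6)" using card_ac by (intro mK5_bound_mono) linarith
      finally show ?thesis using True by (simp add: ws_def)
    next
      case False
      have "ws ! i \<in> V" using i ws nth_mem[of i ws] by auto
      then show ?thesis using nbhd_deletion_bound[OF assms(1) _ assms(3) IH] False assms(4) by simp
    qed
  qed
  also have "\<dots> = (3 * rho ^ 5 + rho ^ 6) * mK5_bound m ?n"
    using mK5_bound_diff[of 5 ?n m] mK5_bound_diff[of 6 ?n m] card_ac
    by (simp add: eval_nat_numeral algebra_simps)
  also have "\<dots> \<le> mK5_bound m ?n"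
    using rho_plus_rho6_le_1 rho5_eq mK5_bound_pos[of m ?n] rho_bounds
    by (intro mult_left_le_one_le) auto
  finally show ?thesis .
qed

lemma clique_nbhd_of_max_degree:
  assumes "finite V" "v \<in> V" "\<And>u. u \<in> V \<Longrightarrow> degree V u \<le> degree V v"
    and clique: "\<And>a c. a \<in> V \<Longrightarrow> c \<in> V \<Longrightarrow> E v a \<Longrightarrow> E v c \<Longrightarrow> a \<noteq> c \<Longrightarrow> E a c"
    and w: "w \<in> V" "E v w"
  shows "V \<inter> nbhd w = V \<inter> nbhd v"
proof -
  let ?N = "{u \<in> V. E v u}"
  have wv: "w \<noteq> v" using w(2) irrefl by auto
  have C: "V \<inter> nbhd v = insert v ?N" using assms(2) by auto
  have sub: "insert v (?N - {w}) \<subseteq> {u \<in> V. E w u}"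
  proof
    fix x assume "x \<in> insert v (?N - {w})"
    then show "x \<in> {u \<in> V. E w u}"
      using assms(2) w clique[of w x] sym[OF w(2)] by auto
  qed
  have "v \<notin> ?N - {w}" using irrefl by auto
  then have "card (insert v (?N - {w})) = Suc (card (?N - {w}))"
    using assms(1) by (simp add: card_insert_disjoint)
  also have "\<dots> = degree V v" using card_Suc_Diff1[of ?N w] assms(1) w by (simp add: degree_def)
  also have "\<dots> \<ge> card {u \<in> V. E w u}" using assms(3)[OF w(1)] by (simp add: degree_def)
  finally have "insert v (?N - {w}) = {u \<in> V. E w u}"
    using assms(1) sub by (intro card_seteq) auto
  then show ?thesis using C w wv by auto
qed

lemma total_red_betti_clique_component:
  assumes "finite V" "v \<in> V" and comp: "\<And>w. w \<in> V \<Longrightarrow> E v w \<Longrightarrow> V \<inter> nbhd w = V \<inter> nbhd v"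
  shows "real (total_red_betti TYPE('k::field) V E)
           \<le> real (degree V v) * real (total_red_betti TYPE('k) (V - nbhd v) E)"
proof -
  define ws where "ws = sorted_list_of_set {u \<in> V. E v u}"
  have ws: "distinct ws" "set ws = {u \<in> V. E v u}" "length ws = degree V v"
    using assms(1) by (auto simp: ws_def degree_def)
  have terms_eq: "V - set (take i ws) - nbhd (ws ! i) = V - nbhd v" if "i < length ws" for i
  proof -
    have "ws ! i \<in> V" "E v (ws ! i)" using ws(2) nth_mem[OF that] by auto
    then have "V \<inter> nbhd (ws ! i) = V \<inter> nbhd v" by (rule comp)
    moreover have "set (take i ws) \<subseteq> V \<inter> nbhd v" using ws(2) set_take_subset[of i ws] by auto
    ultimately show ?thesis by blast
  qed
  have "(\<Sum>i<length ws. real (total_red_betti TYPE('k) (V - set (take i ws) - nbhd (ws ! i)) E))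
      = (\<Sum>i<length ws. real (total_red_betti TYPE('k) (V - nbhd v) E))"
    using terms_eq by (intro sum.cong) simp_all
  then show ?thesis
    using total_red_betti_le_nbhd_sum[OF assms(1,2) ws(1,2), where 'k='k] ws(3) by simp
qed

lemma has_induced_mK5_Suc:
  assumes "C \<subseteq> V" "card C = 5" "\<And>x y. x \<in> C \<Longrightarrow> y \<in> C \<Longrightarrow> x \<noteq> y \<Longrightarrow> E x y"
    and isolated: "\<And>x y. x \<in> C \<Longrightarrow> y \<in> V - C \<Longrightarrow> \<not> E x y"
    and "has_induced_mK5 (V - C) E m"
  shows "has_induced_mK5 V E (Suc m)"
proof -
  obtain B :: "nat \<Rightarrow> 'a set" where
    B1: "\<forall>i<m. B i \<subseteq> V - C \<and> card (B i) = 5 \<and> (\<forall>u\<in>B i. \<forall>v\<in>B i. u \<noteq> v \<longrightarrow> E u v)" and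
    B2: "\<forall>i<m. \<forall>j<m. i \<noteq> j \<longrightarrow> B i \<inter> B j = {} \<and> (\<forall>u\<in>B i. \<forall>v\<in>B j. \<not> E u v)"
    using assms(5) unfolding has_induced_mK5_def by blast
  define B' where "B' = B(m := C)"
  have sep: "S \<inter> C = {} \<and> (\<forall>u\<in>S. \<forall>v\<in>C. \<not> E u v) \<and> C \<inter> S = {} \<and> (\<forall>u\<in>C. \<forall>v\<in>S. \<not> E u v)"
    if "S \<subseteq> V - C" for S
    using that isolated sym by blast
  have "\<forall>i<Suc m. B' i \<subseteq> V \<and> card (B' i) = 5 \<and> (\<forall>u\<in>B' i. \<forall>v\<in>B' i. u \<noteq> v \<longrightarrow> E u v)"
    using B1 assms(1-3) by (auto simp: B'_def less_Suc_eq)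
  moreover have "\<forall>i<Suc m. \<forall>j<Suc m. i \<noteq> j \<longrightarrow> B' i \<inter> B' j = {} \<and> (\<forall>u\<in>B' i. \<forall>v\<in>B' j. \<not> E u v)"
  proof (intro allI impI)
    fix i j assume ij: "i < Suc m" "j < Suc m" "i \<noteq> j"
    consider "i < m" "j < m" | "i < m" "j = m" | "i = m" "j < m" using ij by linarith
    then show "B' i \<inter> B' j = {} \<and> (\<forall>u\<in>B' i. \<forall>v\<in>B' j. \<not> E u v)"
    proof cases
      case 1
      then show ?thesis using B2 ij(3) by (simp add: B'_def)
    next
      case 2
      then show ?thesis using sep[of "B i"] B1 by (simp add: B'_def)
    next
      case 3
      then show ?thesis using sep[of "B j"] B1 by (simp add: B'_def)
    qed
  qed
  ultimately show ?thesis unfolding has_induced_mK5_def by blast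
qed

lemma betti_bound_K5_component:
  assumes "finite V" "v \<in> V" "degree V v = 4" "\<And>u. u \<in> V \<Longrightarrow> degree V u \<le> 4"
    and clique: "\<And>a c. a \<in> V \<Longrightarrow> c \<in> V \<Longrightarrow> E v a \<Longrightarrow> E v c \<Longrightarrow> a \<noteq> c \<Longrightarrow> E a c"
    and free: "\<not> has_induced_mK5 V E (Suc m)"
    and IH: "1 \<le> m \<Longrightarrow> \<not> has_induced_mK5 (V - nbhd v) E m \<Longrightarrow>
      real (total_red_betti TYPE('k::field) (V - nbhd v) E) \<le> mK5_bound m (card (V - nbhd v))"
  shows "real (total_red_betti TYPE('k) V E) \<le> mK5_bound (Suc m) (card V)"
proof -
  let ?C = "V \<inter> nbhd v"
  have comp: "V \<inter> nbhd w = ?C" if "w \<in> V" "E v w" for w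
    using clique_nbhd_of_max_degree[OF assms(1,2) _ clique that] assms(3,4) by simp
  have "card ?C = 5"
  proof -
    have "?C = insert v {u \<in> V. E v u}" "v \<notin> {u \<in> V. E v u}" using assms(2) irrefl by auto
    then show ?thesis using assms(1,3) by (simp add: degree_def)
  qed
  moreover have "E x y" if "x \<in> ?C" "y \<in> ?C" "x \<noteq> y" for x y
    using that clique[of x y] sym by auto
  moreover have "\<not> E x y" if "x \<in> ?C" "y \<in> V - ?C" for x y
    using that comp[of x] by auto
  ultimately have "\<not> has_induced_mK5 (V - ?C) E m"
    using free has_induced_mK5_Suc[of ?C V] by blast
  moreover have "V - ?C = V - nbhd v" by auto
  ultimately have free': "\<not> has_induced_mK5 (V - nbhd v) E m" by simp
  then have "1 \<le> m" using has_induced_mK5_0 by (cases m) auto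
  have card: "card (V - nbhd v) = card V - 5" "5 \<le> card V"
    using card_Diff_nbhd[OF assms(1,2)] assms(3) by simp_all
  have "real (total_red_betti TYPE('k) V E) \<le> 4 * real (total_red_betti TYPE('k) (V - nbhd v) E)"
    using total_red_betti_clique_component[OF assms(1,2) comp, where 'k='k] assms(3) by simp
  also have "\<dots> \<le> 4 * mK5_bound m (card V - 5)"
    using IH[OF \<open>1 \<le> m\<close> free'] card by simp
  also have "\<dots> = mK5_bound (Suc m) (card V)"
    using mK5_bound_Suc[OF \<open>1 \<le> m\<close>, of "card V"] card by simp
  finally show ?thesis .
qed

theorem total_red_betti_le_mK5_bound:
  assumes "finite V" "1 \<le> m" "\<not> has_induced_mK5 V E m"
  shows "real (total_red_betti TYPE('k::field) V E) \<le> mK5_bound m (card V)"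
  using assms
proof (induction "card V" arbitrary: V m rule: less_induct)
  case less
  have IH: "real (total_red_betti TYPE('k) X E) \<le> mK5_bound m (card X)" if "X \<subset> V" for X
    using less.hyps[of X m] less.prems psubset_card_mono[OF less.prems(1) that]
      finite_subset[of X V] has_induced_mK5_mono[of X V E m] that by auto
  consider "V = {}" | x where "x \<in> V" "5 \<le> degree V x" | "V \<noteq> {}" "\<forall>x\<in>V. degree V x \<le> 4"
    by force
  then show ?case
  proof cases
    case 1
    then show ?thesis
      using total_red_betti_empty[where 'k='k and E=E] one_le_mK5_bound_0[OF less.prems(2)] by simp
  next
    case 2
    from 2 IH show ?thesis by (rule betti_bound_high_degree[OF less.prems(1)])
  next
    case max4: 3
    define v where "v = arg_min_on (degree V) V"
    have v: "v \<in> V" "\<And>u. u \<in> V \<Longrightarrow> degree V v \<le> degree V u"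
      using arg_min_if_finite[OF less.prems(1) max4(1), of "degree V"] by (auto simp: v_def not_less)
    consider "degree V v \<le> 3"
      | a c where "degree V v = 4" "a \<in> V" "c \<in> V" "E v a" "E v c" "a \<noteq> c" "\<not> E a c"
      | "degree V v = 4" "\<And>a c. a \<in> V \<Longrightarrow> c \<in> V \<Longrightarrow> E v a \<Longrightarrow> E v c \<Longrightarrow> a \<noteq> c \<Longrightarrow> E a c"
      using max4(2) v(1) by fastforce
    then show ?thesis
    proof cases
      case 1
      from v(2) 1 IH show ?thesis by (rule betti_bound_low_min_degree[OF less.prems(1) v(1)])
    next
      case 2
      from v(2) 2 IH show ?thesis by (rule betti_bound_min_degree_4[OF less.prems(1) v(1)])
    next
      case 3
      obtain m' where m: "m = Suc m'" using less.prems(2) by (cases m) auto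
      have "card (V - nbhd v) < card V" using v(1) less.prems(1) by (intro psubset_card_mono) auto
      then show ?thesis
        using betti_bound_K5_component[OF less.prems(1) v(1) 3(1) _ 3(2), of m'] less.hyps less.prems max4 m
        by fastforce
    qed
  qed
qed

end

theorem proposition6p3:
  fixes V :: "'a::linorder set" and E :: "'a \<Rightarrow> 'a \<Rightarrow> bool" and m :: nat
  assumes "simple_graph V E"
    and "m \<ge> 1"
    and "\<not> has_induced_mK5 V E m"
  shows "real (total_red_betti TYPE('k::field) V E)
           \<le> 4 ^ (m - 1) * 3 powr ((real (card V) - 5 * (real m - 1)) / 4)"
proof -
  interpret graph E
    using assms(1) by unfold_locales (auto simp: simple_graph_def)
  have "finite V" using assms(1) by (simp add: simple_graph_def)
  from total_red_betti_le_mK5_bound[OF this assms(2,3)] show ?thesis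
    by (simp add: mK5_bound_def)
qed

end
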